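(* Let $G=(V,E)$ be a finite undirected graph with $V=\{1,\dots,n\}$. Then $A_H$ is positive definite for every $A\in\mathbb{P}_G$ and every subgraph $H=(V,E')$ of $G$ ($E'\subseteq E$) if and only if $G$ is a union of (vertex-disjoint) trees, i.e. $G$ contains no cycle.
   Context: For a symmetric $n\times n$ real matrix $A=(a_{ij})$ and an undirected graph $K=(V,F)$ on $V=\{1,\dots,n\}$, the thresholded matrix $A_K$ is defined by $(A_K)_{ij}=a_{ij}$ if $i=j$ or $(i,j)\in F$, and $(A_K)_{ij}=0$ otherwise. $\mathbb{P}_G$ denotes the set of symmetric positive definite $n\times n$ real matrices $A$ with $a_{ij}=0$ whenever $i\neq j$ and $(i,j)\notin E$. *)

theory Defs
  imports "HOL-Analysis.Analysis"
begin

text \<open>Vertices are the elements of a finite type 'n (playing the role of {1..n});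
  an undirected simple graph is given by its edge set, each edge a 2-element set of vertices.\<close>

definition undirected_graph :: "'n set set \<Rightarrow> bool" where
  "undirected_graph E \<longleftrightarrow> (\<forall>e\<in>E. \<exists>i j. i \<noteq> j \<and> e = {i, j})"

definition symmetric_matrix :: "real^'n^'n \<Rightarrow> bool" where
  "symmetric_matrix A \<longleftrightarrow> transpose A = A"

definition pos_def :: "real^'n^'n \<Rightarrow> bool" where
  "pos_def A \<longleftrightarrow> symmetric_matrix A \<and> (\<forall>x. x \<noteq> 0 \<longrightarrow> x \<bullet> (A *v x) > 0)"

definition threshold :: "'n set set \<Rightarrow> real^'n^'n \<Rightarrow> real^'n^'n" where
  "threshold F A = (\<chi> i j. if i = j \<or> {i, j} \<in> F then A $ i $ j else 0)"

definition PG :: "'n set set \<Rightarrow> (real^'n^'n) set" where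
  "PG E = {A. pos_def A \<and> (\<forall>i j. i \<noteq> j \<and> {i, j} \<notin> E \<longrightarrow> A $ i $ j = 0)}"

definition is_cycle :: "'n set set \<Rightarrow> 'n list \<Rightarrow> bool" where
  "is_cycle E vs \<longleftrightarrow> length vs \<ge> 3 \<and> distinct vs \<and>
     (\<forall>k < length vs. {vs ! k, vs ! ((k + 1) mod length vs)} \<in> E)"

definition has_cycle :: "'n set set \<Rightarrow> bool" where
  "has_cycle E \<longleftrightarrow> (\<exists>vs. is_cycle E vs)"

end

theory Submission
  imports Defs "HOL-Library.Transitive_Closure_Table"
begin

text \<open>If E has no cycle and E' \<subseteq> E, then no edge of E - E' can join two vertices of the same
  connected component of E' (it would close a cycle). Hence thresholding a matrix of P_G at E'
  only deletes entries between different components: A_E' is the block-diagonal part of A along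
  these components, and its quadratic form at x is the sum of the quadratic forms of A at the
  restrictions of x to the blocks, which is positive.

  Conversely, along a cycle v_0, ..., v_m, v_0 take the matrix with quadratic form
  \<epsilon>|x|^2 + \<Sum>(x(v_l) - x(v_(l+1)))^2 - (x(v_0) - x(v_m))^2 / m. It lies in P_G and is positive
  definite because, by Cauchy-Schwarz, the path terms dominate the chord term. Deleting the chord
  {v_0, v_m} replaces the last term by -(x(v_0)^2 + x(v_m)^2) / m, which makes the form negative at
  the all-ones vector once \<epsilon> is small.\<close>

lemma quadratic_form_eq_double_sum:
  "x \<bullet> (M *v x) = (\<Sum>i\<in>UNIV. \<Sum>j\<in>UNIV. x$i * M$i$j * x$j)" for x :: "real^'n"
  unfolding inner_vec_def matrix_vector_mult_def
  by (simp add: sum_distrib_left mult.assoc)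

definition restrict_vec :: "'n set \<Rightarrow> real^'n \<Rightarrow> real^'n" where
  "restrict_vec S x = (\<chi> i. if i \<in> S then x$i else 0)"

lemma quadratic_form_restrict_vec:
  "restrict_vec S x \<bullet> (M *v restrict_vec S x) = (\<Sum>i\<in>S. \<Sum>j\<in>S. x$i * M$i$j * x$j)"
  for x :: "real^'n"
proof -
  have "restrict_vec S x \<bullet> (M *v restrict_vec S x) =
      (\<Sum>i\<in>UNIV. if i \<in> S then \<Sum>j\<in>UNIV. if j \<in> S then x$i * M$i$j * x$j else 0 else 0)"
    unfolding quadratic_form_eq_double_sum by (auto simp: restrict_vec_def intro!: sum.cong)
  then show ?thesis by (simp add: sum.inter_restrict[symmetric])
qed

definition block_part :: "('n \<Rightarrow> 'b) \<Rightarrow> real^'n^'n \<Rightarrow> real^'n^'n" where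
  "block_part cls M = (\<chi> i j. if cls i = cls j then M$i$j else 0)"

lemma quadratic_form_block_part:
  fixes M :: "real^'n^'n" and cls :: "'n \<Rightarrow> 'b"
  shows "x \<bullet> (block_part cls M *v x) =
    (\<Sum>b\<in>range cls. restrict_vec {j. cls j = b} x \<bullet> (M *v restrict_vec {j. cls j = b} x))"
proof -
  let ?q = "\<lambda>i j. x$i * M$i$j * x$j"
  have "x$i * block_part cls M $i$j * x$j = (if cls j = cls i then ?q i j else 0)" for i j
    by (simp add: block_part_def eq_commute)
  then have "x \<bullet> (block_part cls M *v x) = (\<Sum>i\<in>UNIV. \<Sum>j\<in>{j. cls j = cls i}. ?q i j)"
    unfolding quadratic_form_eq_double_sum by (simp add: sum.If_cases)
  also have "\<dots> = (\<Sum>b\<in>range cls. \<Sum>i | cls i = b. \<Sum>j | cls j = cls i. ?q i j)"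
    by (rule sum.group[of UNIV "range cls" cls, simplified, symmetric])
  also have "\<dots> = (\<Sum>b\<in>range cls. \<Sum>i\<in>{j. cls j = b}. \<Sum>j\<in>{j. cls j = b}. ?q i j)"
    by (auto intro!: sum.cong)
  finally show ?thesis
    by (simp add: quadratic_form_restrict_vec)
qed

lemma pos_def_block_part:
  fixes M :: "real^'n^'n" and cls :: "'n \<Rightarrow> 'b"
  assumes "pos_def M"
  shows "pos_def (block_part cls M)"
  unfolding pos_def_def
proof (intro conjI allI impI)
  show "symmetric_matrix (block_part cls M)"
    using assms by (auto simp: pos_def_def symmetric_matrix_def block_part_def vec_eq_iff transpose_def)
  fix x :: "real^'n"
  assume "x \<noteq> 0"
  then obtain i where "x $ i \<noteq> 0"
    by (auto simp: vec_eq_iff)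
  let ?y = "\<lambda>b. restrict_vec {j. cls j = b} x"
  have nonneg: "0 \<le> ?y b \<bullet> (M *v ?y b)" for b
    using assms by (cases "?y b = 0") (auto simp: pos_def_def less_imp_le)
  have "?y (cls i) \<noteq> 0"
    using \<open>x $ i \<noteq> 0\<close> by (auto simp: restrict_vec_def vec_eq_iff)
  then have "0 < ?y (cls i) \<bullet> (M *v ?y (cls i))"
    using assms by (simp add: pos_def_def)
  then have "0 < (\<Sum>b\<in>range cls. ?y b \<bullet> (M *v ?y b))"
    by (intro sum_pos2[where i = "cls i"]) (auto intro: nonneg)
  then show "0 < x \<bullet> (block_part cls M *v x)"
    by (simp add: quadratic_form_block_part)
qed

definition outer_prod :: "real^'n \<Rightarrow> real^'n \<Rightarrow> real^'n^'n" where
  "outer_prod u w = (\<chi> i j. u$i * w$j)"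

lemma quadratic_form_outer_prod: "x \<bullet> (outer_prod u w *v x) = (x \<bullet> u) * (w \<bullet> x)"
  for x :: "real^'n"
  unfolding outer_prod_def inner_vec_def matrix_vector_mult_def sum_product
  by (simp add: sum_distrib_left mult_ac)

lemma linear_quadratic_form: "linear (\<lambda>M::real^'n^'n. x \<bullet> (M *v x))"
  by (rule linearI)
    (simp_all add: matrix_vector_mult_add_rdistrib inner_add_right flip: scaleR_matrix_vector_assoc)

definition path_matrix :: "real \<Rightarrow> real \<Rightarrow> (nat \<Rightarrow> 'n) \<Rightarrow> nat \<Rightarrow> real^'n^'n" where
  "path_matrix \<epsilon> c v m =
     \<epsilon> *\<^sub>R mat 1
   + (\<Sum>l<m. outer_prod (axis (v l) 1 - axis (v (Suc l)) 1) (axis (v l) 1 - axis (v (Suc l)) 1))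
   - c *\<^sub>R (outer_prod (axis (v 0) 1) (axis (v 0) 1) + outer_prod (axis (v m) 1) (axis (v m) 1))"

definition cycle_matrix :: "real \<Rightarrow> real \<Rightarrow> (nat \<Rightarrow> 'n) \<Rightarrow> nat \<Rightarrow> real^'n^'n" where
  "cycle_matrix \<epsilon> c v m =
     path_matrix \<epsilon> c v m
   + c *\<^sub>R (outer_prod (axis (v 0) 1) (axis (v m) 1) + outer_prod (axis (v m) 1) (axis (v 0) 1))"

lemma quadratic_form_path_matrix:
  fixes x :: "real^'n"
  shows "x \<bullet> (path_matrix \<epsilon> c v m *v x) =
    \<epsilon> * (x \<bullet> x) + (\<Sum>l<m. (x $ v l - x $ v (Suc l))\<^sup>2) - c * ((x $ v 0)\<^sup>2 + (x $ v m)\<^sup>2)"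
  unfolding path_matrix_def
  by (simp add: linear_add[OF linear_quadratic_form] linear_diff[OF linear_quadratic_form]
      linear_sum[OF linear_quadratic_form] linear_scale[OF linear_quadratic_form]
      quadratic_form_outer_prod inner_diff_right inner_diff_left inner_axis inner_axis' power2_eq_square)

lemma quadratic_form_cycle_matrix:
  fixes x :: "real^'n"
  shows "x \<bullet> (cycle_matrix \<epsilon> c v m *v x) =
    \<epsilon> * (x \<bullet> x) + (\<Sum>l<m. (x $ v l - x $ v (Suc l))\<^sup>2) - c * (x $ v 0 - x $ v m)\<^sup>2"
  unfolding cycle_matrix_def
  by (simp add: linear_add[OF linear_quadratic_form] linear_scale[OF linear_quadratic_form]
      quadratic_form_path_matrix quadratic_form_outer_prod inner_axis inner_axis' power2_eq_square
      algebra_simps)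

lemma path_matrix_offdiag_nonzero:
  assumes "i \<noteq> j" "path_matrix \<epsilon> c v m $ i $ j \<noteq> 0"
  shows "\<exists>l<m. {i, j} = {v l, v (Suc l)}"
proof (rule ccontr)
  assume "\<not> ?thesis"
  with \<open>i \<noteq> j\<close> have "path_matrix \<epsilon> c v m $ i $ j = 0"
    by (auto simp: path_matrix_def outer_prod_def mat_def axis_def intro!: sum.neutral
        split: if_splits)
  with assms(2) show False by contradiction
qed

lemma cycle_matrix_entry:
  assumes "v 0 \<noteq> v m"
  shows "cycle_matrix \<epsilon> c v m $ i $ j =
    path_matrix \<epsilon> c v m $ i $ j + (if {i, j} = {v 0, v m} then c else 0)"
  using assms by (auto simp: cycle_matrix_def outer_prod_def axis_def doubleton_eq_iff)

lemma symmetric_cycle_matrix: "symmetric_matrix (cycle_matrix \<epsilon> c v m)"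
  by (simp add: symmetric_matrix_def vec_eq_iff transpose_def cycle_matrix_def path_matrix_def
      outer_prod_def mat_def mult.commute add.commute)

lemma square_diff_le_telescope:
  fixes f :: "nat \<Rightarrow> real"
  shows "(f 0 - f m)\<^sup>2 \<le> real m * (\<Sum>l<m. (f l - f (Suc l))\<^sup>2)"
  using sum_squared_le_sum_of_squares[of "\<lambda>l. f l - f (Suc l)" "{..<m}"]
  by (simp add: sum_lessThan_telescope' mult.commute)

lemma pos_def_cycle_matrix:
  fixes v :: "nat \<Rightarrow> 'n::finite"
  assumes "0 < \<epsilon>" "0 < m" "c \<le> 1 / real m"
  shows "pos_def (cycle_matrix \<epsilon> c v m)"
  unfolding pos_def_def
proof (intro conjI allI impI symmetric_cycle_matrix)
  fix x :: "real^'n"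
  assume "x \<noteq> 0"
  have "c * (x $ v 0 - x $ v m)\<^sup>2 \<le> (\<Sum>l<m. (x $ v l - x $ v (Suc l))\<^sup>2)"
  proof -
    have "c * (x $ v 0 - x $ v m)\<^sup>2 \<le> (1 / real m) * (x $ v 0 - x $ v m)\<^sup>2"
      using mult_right_mono[OF assms(3) zero_le_power2] by simp
    also have "\<dots> \<le> (\<Sum>l<m. (x $ v l - x $ v (Suc l))\<^sup>2)"
      using square_diff_le_telescope[of "\<lambda>l. x $ v l" m] assms(2)
      by (simp add: field_simps)
    finally show ?thesis .
  qed
  moreover have "0 < \<epsilon> * (x \<bullet> x)"
    using assms(1) \<open>x \<noteq> 0\<close> by simp
  ultimately show "0 < x \<bullet> (cycle_matrix \<epsilon> c v m *v x)"
    unfolding quadratic_form_cycle_matrix by linarith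
qed

lemma not_pos_def_path_matrix:
  fixes v :: "nat \<Rightarrow> 'n::finite" and \<epsilon> c :: real
  assumes "\<epsilon> * CARD('n) < 2 * c"
  shows "\<not> pos_def (path_matrix \<epsilon> c v m)"
proof -
  have "(1 :: real^'n) \<bullet> 1 = CARD('n)"
    by (simp add: inner_vec_def)
  then have "(1 :: real^'n) \<bullet> (path_matrix \<epsilon> c v m *v 1) = \<epsilon> * CARD('n) - 2 * c"
    by (simp add: quadratic_form_path_matrix)
  with assms show ?thesis
    unfolding pos_def_def by (metis diff_less_0_iff_less not_less_iff_gr_or_eq one_neq_zero)
qed

definition adjacent :: "'n set set \<Rightarrow> 'n \<Rightarrow> 'n \<Rightarrow> bool" where
  "adjacent F a b \<longleftrightarrow> {a, b} \<in> F"

lemma symp_adjacent: "symp (adjacent F)"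
  by (auto simp: symp_def adjacent_def insert_commute)

lemma rtranclp_adjacent_eq_iff:
  "(adjacent F)\<^sup>*\<^sup>* i = (adjacent F)\<^sup>*\<^sup>* j \<longleftrightarrow> (adjacent F)\<^sup>*\<^sup>* i j"
proof
  assume "(adjacent F)\<^sup>*\<^sup>* i = (adjacent F)\<^sup>*\<^sup>* j"
  then show "(adjacent F)\<^sup>*\<^sup>* i j"
    by (metis rtranclp.rtrancl_refl)
next
  have sym: "(adjacent F)\<^sup>*\<^sup>* a b \<Longrightarrow> (adjacent F)\<^sup>*\<^sup>* b a" for a b
    by (metis sympD symp_rtranclp symp_adjacent)
  assume "(adjacent F)\<^sup>*\<^sup>* i j"
  then show "(adjacent F)\<^sup>*\<^sup>* i = (adjacent F)\<^sup>*\<^sup>* j"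
    by (intro ext iffI) (metis rtranclp_trans sym)+
qed

lemma has_cycle_if_edge_joined_by_path:
  assumes "E' \<subseteq> E" "i \<noteq> j" "{i, j} \<in> E" "{i, j} \<notin> E'" "(adjacent E')\<^sup>*\<^sup>* i j"
  shows "has_cycle E"
proof -
  obtain ys where path: "rtrancl_path (adjacent E') i ys j" and "distinct (i # ys)"
    using assms(5) rtrancl_path_distinct rtranclp_eq_rtrancl_path by metis
  have "ys \<noteq> []"
    using path \<open>i \<noteq> j\<close> by (auto elim: rtrancl_path.cases)
  have last: "last ys = j"
    using rtrancl_path_last[OF path \<open>ys \<noteq> []\<close>] .
  have "ys \<noteq> [j]"
    using rtrancl_path_nth[OF path, of 0] assms(4) by (auto simp: adjacent_def)
  with \<open>ys \<noteq> []\<close> last have "2 \<le> length ys"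
    by (cases ys rule: rev_cases) (auto simp: Suc_le_eq)
  have "is_cycle E (i # ys)"
    unfolding is_cycle_def
  proof (intro conjI allI impI)
    show "3 \<le> length (i # ys)"
      using \<open>2 \<le> length ys\<close> by simp
    show "distinct (i # ys)" by fact
    fix k
    assume "k < length (i # ys)"
    then consider "k < length ys" | "k = length ys"
      by fastforce
    then show "{(i # ys) ! k, (i # ys) ! ((k + 1) mod length (i # ys))} \<in> E"
    proof cases
      case 1
      then show ?thesis
        using rtrancl_path_nth[OF path 1] assms(1) by (auto simp: adjacent_def)
    next
      case 2
      then have "(i # ys) ! k = j"
        using last \<open>ys \<noteq> []\<close> by (simp add: last_conv_nth)
      with 2 show ?thesis
        using assms(3) by (simp add: insert_commute)
    qed
  qed
  then show ?thesis
    unfolding has_cycle_def by blast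
qed

lemma threshold_eq_block_part:
  assumes "\<not> has_cycle E" "E' \<subseteq> E"
    and supp: "\<And>i j. i \<noteq> j \<Longrightarrow> {i, j} \<notin> E \<Longrightarrow> A $ i $ j = 0"
  shows "threshold E' A = block_part (adjacent E')\<^sup>*\<^sup>* A"
proof -
  have "threshold E' A $ i $ j = block_part (adjacent E')\<^sup>*\<^sup>* A $ i $ j" for i j
  proof (cases "i = j \<or> {i, j} \<in> E'")
    case True
    then have "(adjacent E')\<^sup>*\<^sup>* i j"
      by (auto simp: adjacent_def)
    with True show ?thesis
      by (simp add: threshold_def block_part_def rtranclp_adjacent_eq_iff)
  next
    case False
    have "A $ i $ j = 0" if "(adjacent E')\<^sup>*\<^sup>* i j"
      using has_cycle_if_edge_joined_by_path[OF assms(2) _ _ _ that] supp False assms(1) by blast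
    with False show ?thesis
      by (auto simp: threshold_def block_part_def rtranclp_adjacent_eq_iff)
  qed
  then show ?thesis
    by (simp add: vec_eq_iff)
qed

lemma cycle_path_with_chord:
  assumes "is_cycle E vs"
  obtains m v where "0 < m" "v 0 \<noteq> v m" "{v 0, v m} \<in> E"
    "\<And>l. l < m \<Longrightarrow> {v l, v (Suc l)} \<in> E"
    "\<And>l. l < m \<Longrightarrow> {v l, v (Suc l)} \<noteq> {v 0, v m}"
proof
  define m where "m = length vs - 1"
  have "3 \<le> length vs" "distinct vs"
    and edge: "\<And>k. k < length vs \<Longrightarrow> {vs ! k, vs ! ((k + 1) mod length vs)} \<in> E"
    using assms by (auto simp: is_cycle_def)
  then have len: "length vs = Suc m" "2 \<le> m"
    by (auto simp: m_def)
  have inj: "vs ! k = vs ! k' \<longleftrightarrow> k = k'" if "k \<le> m" "k' \<le> m" for k k'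
    using that \<open>distinct vs\<close> len by (simp add: nth_eq_iff_index_eq)
  show "0 < m" "vs ! 0 \<noteq> vs ! m"
    using len inj[of 0 m] by auto
  show "{vs ! 0, vs ! m} \<in> E"
    using edge[of m] len by (simp add: insert_commute)
  show "{vs ! l, vs ! Suc l} \<in> E" if "l < m" for l
    using edge[of l] that len by simp
  show "{vs ! l, vs ! Suc l} \<noteq> {vs ! 0, vs ! m}" if "l < m" for l
    using that len inj[of l 0] inj[of l m] inj[of "Suc l" 0] inj[of "Suc l" m]
    by (auto simp: doubleton_eq_iff)
qed

lemma threshold_not_pos_def_if_path_with_chord:
  fixes v :: "nat \<Rightarrow> 'n::finite"
  assumes "0 < m" "v 0 \<noteq> v m" "{v 0, v m} \<in> E"
    and path: "\<And>l. l < m \<Longrightarrow> {v l, v (Suc l)} \<in> E"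
    and chord: "\<And>l. l < m \<Longrightarrow> {v l, v (Suc l)} \<noteq> {v 0, v m}"
  shows "\<exists>A \<in> PG E. \<exists>E' \<subseteq> E. \<not> pos_def (threshold E' A)"
proof -
  define c where "c = 1 / real m"
  define \<epsilon> where "\<epsilon> = c / CARD('n)"
  define A where "A = cycle_matrix \<epsilon> c v m"
  define E' where "E' = E - {{v 0, v m}}"
  have "0 < c"
    using assms(1) by (simp add: c_def)
  have path_zero: "path_matrix \<epsilon> c v m $ i $ j = 0" if "i \<noteq> j" "{i, j} \<notin> E - {{v 0, v m}}" for i j
  proof (rule ccontr)
    assume "path_matrix \<epsilon> c v m $ i $ j \<noteq> 0"
    then obtain l where "l < m" "{i, j} = {v l, v (Suc l)}"
      using path_matrix_offdiag_nonzero[OF \<open>i \<noteq> j\<close>] by blast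
    then show False
      using path[OF \<open>l < m\<close>] chord[OF \<open>l < m\<close>] that(2) by simp
  qed
  have "pos_def A"
    unfolding A_def using \<open>0 < c\<close> assms(1)
    by (intro pos_def_cycle_matrix) (simp_all add: \<epsilon>_def c_def)
  moreover have "A $ i $ j = 0" if "i \<noteq> j" "{i, j} \<notin> E" for i j
    using that path_zero assms(2,3) by (auto simp: A_def cycle_matrix_entry)
  ultimately have "A \<in> PG E"
    by (simp add: PG_def)
  have "threshold E' A = path_matrix \<epsilon> c v m"
    using path_zero assms(2)
    by (auto simp: vec_eq_iff threshold_def A_def E'_def cycle_matrix_entry)
  moreover have "\<not> pos_def (path_matrix \<epsilon> c v m)"
    using \<open>0 < c\<close> by (intro not_pos_def_path_matrix) (simp add: \<epsilon>_def)
  ultimately have "\<not> pos_def (threshold E' A)"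
    by simp
  moreover have "E' \<subseteq> E"
    by (auto simp: E'_def)
  ultimately show ?thesis
    using \<open>A \<in> PG E\<close> by blast
qed

theorem corollary5:
  fixes E :: "'n::finite set set"
  assumes "undirected_graph E"
  shows "(\<forall>A \<in> PG E. \<forall>E' \<subseteq> E. pos_def (threshold E' A)) \<longleftrightarrow> \<not> has_cycle E"
proof
  assume all_pos_def: "\<forall>A \<in> PG E. \<forall>E' \<subseteq> E. pos_def (threshold E' A)"
  show "\<not> has_cycle E"
  proof
    assume "has_cycle E"
    then obtain vs where "is_cycle E vs"
      by (auto simp: has_cycle_def)
    then obtain m and v :: "nat \<Rightarrow> 'n" where "0 < m" "v 0 \<noteq> v m" "{v 0, v m} \<in> E"
      "\<And>l. l < m \<Longrightarrow> {v l, v (Suc l)} \<in> E" "\<And>l. l < m \<Longrightarrow> {v l, v (Suc l)} \<noteq> {v 0, v m}"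
      by (rule cycle_path_with_chord) blast
    then show False
      using threshold_not_pos_def_if_path_with_chord all_pos_def by metis
  qed
next
  assume "\<not> has_cycle E"
  show "\<forall>A \<in> PG E. \<forall>E' \<subseteq> E. pos_def (threshold E' A)"
  proof (intro ballI allI impI)
    fix A E'
    assume "A \<in> PG E" "E' \<subseteq> E"
    then show "pos_def (threshold E' A)"
      using threshold_eq_block_part[OF \<open>\<not> has_cycle E\<close> \<open>E' \<subseteq> E\<close>] pos_def_block_part
      by (auto simp: PG_def)
  qed
qed

end
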